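(* Let $\mathcal{A}$ be a category with pullbacks and $\mathcal{D}$ a category. Then any orthogonal factorization system on the category $\mathrm{CartNt}[\mathcal{A},\mathcal{D}]$ (all functors $\mathcal{A}\to\mathcal{D}$, and only cartesian natural transformations as morphisms) restricts to an orthogonal factorization system on the full subcategory $\mathrm{Cart}[\mathcal{A},\mathcal{D}]$ of cartesian functors and cartesian natural transformations.
   Context: A natural transformation is cartesian if all its naturality squares are pullbacks; a functor is cartesian if it preserves pullbacks. An orthogonal factorization system $(\mathcal{E},\mathcal{M})$: both classes contain all isomorphisms and are closed under composition; each commuting square $g\circ e = m\circ f$ with $e\in\mathcal{E}$, $m\in\mathcal{M}$ has a unique diagonal $d$ with $d\circ e = f$, $m\circ d = g$; every morphism factors as $m\circ e$ with $e\in\mathcal{E}$, $m\in\mathcal{M}$. Restricting means taking the classes $\mathcal{E}\cap\mathrm{Cart}[\mathcal{A},\mathcal{D}]$ and $\mathcal{M}\cap\mathrm{Cart}[\mathcal{A},\mathcal{D}]$. *)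

theory Defs
  imports "HOL-Library.FuncSet"
begin

record ('o, 'a) cat =
  cObj  :: "'o set"
  cArr  :: "'a set"
  cDom  :: "'a \<Rightarrow> 'o"
  cCod  :: "'a \<Rightarrow> 'o"
  cId   :: "'o \<Rightarrow> 'a"
  cComp :: "'a \<Rightarrow> 'a \<Rightarrow> 'a"   (* cComp C g f = g o f, defined when cDom g = cCod f *)

definition category :: "('o, 'a) cat \<Rightarrow> bool" where
  "category C \<longleftrightarrow>
     (\<forall>f\<in>cArr C. cDom C f \<in> cObj C \<and> cCod C f \<in> cObj C) \<and>
     (\<forall>x\<in>cObj C. cId C x \<in> cArr C \<and> cDom C (cId C x) = x \<and> cCod C (cId C x) = x) \<and>
     (\<forall>f\<in>cArr C. \<forall>g\<in>cArr C. cDom C g = cCod C f \<longrightarrow>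
        cComp C g f \<in> cArr C \<and> cDom C (cComp C g f) = cDom C f \<and> cCod C (cComp C g f) = cCod C g) \<and>
     (\<forall>f\<in>cArr C. cComp C (cId C (cCod C f)) f = f \<and> cComp C f (cId C (cDom C f)) = f) \<and>
     (\<forall>f\<in>cArr C. \<forall>g\<in>cArr C. \<forall>h\<in>cArr C. cDom C g = cCod C f \<longrightarrow> cDom C h = cCod C g \<longrightarrow>
        cComp C h (cComp C g f) = cComp C (cComp C h g) f)"

definition hom :: "('o, 'a) cat \<Rightarrow> 'o \<Rightarrow> 'o \<Rightarrow> 'a set" where
  "hom C x y = {f \<in> cArr C. cDom C f = x \<and> cCod C f = y}"

definition iso :: "('o, 'a) cat \<Rightarrow> 'a \<Rightarrow> bool" where
  "iso C f \<longleftrightarrow> f \<in> cArr C \<and>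
     (\<exists>g\<in>cArr C. cDom C g = cCod C f \<and> cCod C g = cDom C f \<and>
        cComp C g f = cId C (cDom C f) \<and> cComp C f g = cId C (cCod C f))"

definition pullback :: "('o, 'a) cat \<Rightarrow> 'a \<Rightarrow> 'a \<Rightarrow> 'a \<Rightarrow> 'a \<Rightarrow> bool" where
  "pullback C f g p q \<longleftrightarrow>
     f \<in> cArr C \<and> g \<in> cArr C \<and> p \<in> cArr C \<and> q \<in> cArr C \<and>
     cCod C f = cCod C g \<and> cCod C p = cDom C f \<and> cCod C q = cDom C g \<and> cDom C p = cDom C q \<and>
     cComp C f p = cComp C g q \<and>
     (\<forall>p' q'. p' \<in> cArr C \<and> q' \<in> cArr C \<and> cDom C p' = cDom C q' \<and>
        cCod C p' = cDom C f \<and> cCod C q' = cDom C g \<and> cComp C f p' = cComp C g q' \<longrightarrow>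
        (\<exists>!h. h \<in> cArr C \<and> cDom C h = cDom C p' \<and> cCod C h = cDom C p \<and>
              cComp C p h = p' \<and> cComp C q h = q'))"

definition has_pullbacks :: "('o, 'a) cat \<Rightarrow> bool" where
  "has_pullbacks C \<longleftrightarrow>
     (\<forall>f\<in>cArr C. \<forall>g\<in>cArr C. cCod C f = cCod C g \<longrightarrow> (\<exists>p q. pullback C f g p q))"

type_synonym ('o1, 'a1, 'o2, 'a2) ftor = "('o1 \<Rightarrow> 'o2) \<times> ('a1 \<Rightarrow> 'a2)"

definition fobj :: "('o1, 'a1, 'o2, 'a2) ftor \<Rightarrow> 'o1 \<Rightarrow> 'o2" where "fobj F = fst F"
definition farr :: "('o1, 'a1, 'o2, 'a2) ftor \<Rightarrow> 'a1 \<Rightarrow> 'a2" where "farr F = snd F"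

definition "functor" :: "('o1, 'a1) cat \<Rightarrow> ('o2, 'a2) cat \<Rightarrow> ('o1, 'a1, 'o2, 'a2) ftor \<Rightarrow> bool" where
  "functor A B F \<longleftrightarrow>
     (\<forall>x\<in>cObj A. fobj F x \<in> cObj B) \<and>
     (\<forall>f\<in>cArr A. farr F f \<in> hom B (fobj F (cDom A f)) (fobj F (cCod A f))) \<and>
     (\<forall>x\<in>cObj A. farr F (cId A x) = cId B (fobj F x)) \<and>
     (\<forall>f\<in>cArr A. \<forall>g\<in>cArr A. cDom A g = cCod A f \<longrightarrow>
        farr F (cComp A g f) = cComp B (farr F g) (farr F f)) \<and>
     (\<forall>x. x \<notin> cObj A \<longrightarrow> fobj F x = undefined) \<and>
     (\<forall>f. f \<notin> cArr A \<longrightarrow> farr F f = undefined)"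

definition nat_trans :: "('o1, 'a1) cat \<Rightarrow> ('o2, 'a2) cat \<Rightarrow> ('o1, 'a1, 'o2, 'a2) ftor \<Rightarrow>
    ('o1, 'a1, 'o2, 'a2) ftor \<Rightarrow> ('o1 \<Rightarrow> 'a2) \<Rightarrow> bool" where
  "nat_trans A B F G \<alpha> \<longleftrightarrow> functor A B F \<and> functor A B G \<and>
     (\<forall>x\<in>cObj A. \<alpha> x \<in> hom B (fobj F x) (fobj G x)) \<and>
     (\<forall>u\<in>cArr A. cComp B (farr G u) (\<alpha> (cDom A u)) = cComp B (\<alpha> (cCod A u)) (farr F u)) \<and>
     (\<forall>x. x \<notin> cObj A \<longrightarrow> \<alpha> x = undefined)"

definition cartesian_functor :: "('o1, 'a1) cat \<Rightarrow> ('o2, 'a2) cat \<Rightarrow> ('o1, 'a1, 'o2, 'a2) ftor \<Rightarrow> bool" where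
  "cartesian_functor A B F \<longleftrightarrow> functor A B F \<and>
     (\<forall>f g p q. pullback A f g p q \<longrightarrow> pullback B (farr F f) (farr F g) (farr F p) (farr F q))"

definition cartesian_nt :: "('o1, 'a1) cat \<Rightarrow> ('o2, 'a2) cat \<Rightarrow> ('o1, 'a1, 'o2, 'a2) ftor \<Rightarrow>
    ('o1, 'a1, 'o2, 'a2) ftor \<Rightarrow> ('o1 \<Rightarrow> 'a2) \<Rightarrow> bool" where
  "cartesian_nt A B F G \<alpha> \<longleftrightarrow> nat_trans A B F G \<alpha> \<and>
     (\<forall>u\<in>cArr A. pullback B (farr G u) (\<alpha> (cCod A u)) (\<alpha> (cDom A u)) (farr F u))"

type_synonym ('o1, 'a1, 'o2, 'a2) ntarr =
  "('o1, 'a1, 'o2, 'a2) ftor \<times> ('o1, 'a1, 'o2, 'a2) ftor \<times> ('o1 \<Rightarrow> 'a2)"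

definition CartNt :: "('o1, 'a1) cat \<Rightarrow> ('o2, 'a2) cat \<Rightarrow>
    (('o1, 'a1, 'o2, 'a2) ftor, ('o1, 'a1, 'o2, 'a2) ntarr) cat" where
  "CartNt A D = \<lparr> cObj = {F. functor A D F},
     cArr = {(F, G, \<alpha>). cartesian_nt A D F G \<alpha>},
     cDom = (\<lambda>(F, G, \<alpha>). F),
     cCod = (\<lambda>(F, G, \<alpha>). G),
     cId = (\<lambda>F. (F, F, \<lambda>x\<in>cObj A. cId D (fobj F x))),
     cComp = (\<lambda>(G', H, \<beta>) (F, G, \<alpha>). (F, H, \<lambda>x\<in>cObj A. cComp D (\<beta> x) (\<alpha> x))) \<rparr>"

definition Cart :: "('o1, 'a1) cat \<Rightarrow> ('o2, 'a2) cat \<Rightarrow>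
    (('o1, 'a1, 'o2, 'a2) ftor, ('o1, 'a1, 'o2, 'a2) ntarr) cat" where
  "Cart A D = \<lparr> cObj = {F. cartesian_functor A D F},
     cArr = {(F, G, \<alpha>). cartesian_functor A D F \<and> cartesian_functor A D G \<and> cartesian_nt A D F G \<alpha>},
     cDom = (\<lambda>(F, G, \<alpha>). F),
     cCod = (\<lambda>(F, G, \<alpha>). G),
     cId = (\<lambda>F. (F, F, \<lambda>x\<in>cObj A. cId D (fobj F x))),
     cComp = (\<lambda>(G', H, \<beta>) (F, G, \<alpha>). (F, H, \<lambda>x\<in>cObj A. cComp D (\<beta> x) (\<alpha> x))) \<rparr>"

definition ofs :: "('o, 'a) cat \<Rightarrow> 'a set \<Rightarrow> 'a set \<Rightarrow> bool" where
  "ofs C E M \<longleftrightarrow>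
     E \<subseteq> cArr C \<and> M \<subseteq> cArr C \<and>
     (\<forall>f. iso C f \<longrightarrow> f \<in> E \<and> f \<in> M) \<and>
     (\<forall>e1\<in>E. \<forall>e2\<in>E. cDom C e2 = cCod C e1 \<longrightarrow> cComp C e2 e1 \<in> E) \<and>
     (\<forall>m1\<in>M. \<forall>m2\<in>M. cDom C m2 = cCod C m1 \<longrightarrow> cComp C m2 m1 \<in> M) \<and>
     (\<forall>e\<in>E. \<forall>m\<in>M. \<forall>f\<in>cArr C. \<forall>g\<in>cArr C.
        cDom C f = cDom C e \<and> cCod C f = cDom C m \<and> cDom C g = cCod C e \<and> cCod C g = cCod C m \<and>
        cComp C g e = cComp C m f \<longrightarrow>
        (\<exists>!d. d \<in> cArr C \<and> cDom C d = cCod C e \<and> cCod C d = cDom C m \<and>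
              cComp C d e = f \<and> cComp C m d = g)) \<and>
     (\<forall>h\<in>cArr C. \<exists>e\<in>E. \<exists>m\<in>M. cDom C m = cCod C e \<and> cComp C m e = h)"

end

theory Submission
  imports Defs
begin

(*
  The point is that the middle functor of a factorization between cartesian functors is
  cartesian.  Let mu : G => H be cartesian with H cartesian, and take a pullback square in A.
  Pasting its H-image with the naturality square of mu along one edge gives a pullback; by
  naturality this rectangle is also the G-image of the square pasted with the naturality square
  along another edge, and since that naturality square is a pullback, cancelling it shows that
  the G-image is a pullback.  Hence Cart[A,D] is a full subcategory of the category CartNt[A,D]
  containing the domain of every arrow into it, and an orthogonal factorization system
  restricts to such a subcategory.
*)

context
  fixes C :: "('o, 'a) cat"
  assumes C: "category C"
begin

lemma comp_in_hom: "f \<in> hom C x y \<Longrightarrow> g \<in> hom C y z \<Longrightarrow> cComp C g f \<in> hom C x z"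
  using C unfolding category_def hom_def by auto

lemma comp_assoc:
  "f \<in> hom C x y \<Longrightarrow> g \<in> hom C y z \<Longrightarrow> h \<in> hom C z w \<Longrightarrow>
    cComp C h (cComp C g f) = cComp C (cComp C h g) f"
  using C unfolding category_def hom_def by auto

lemma id_in_hom: "x \<in> cObj C \<Longrightarrow> cId C x \<in> hom C x x"
  using C unfolding category_def hom_def by auto

lemma comp_id_left: "f \<in> hom C x y \<Longrightarrow> cComp C (cId C y) f = f"
  using C unfolding category_def hom_def by auto

lemma comp_id_right: "f \<in> hom C x y \<Longrightarrow> cComp C f (cId C x) = f"
  using C unfolding category_def hom_def by auto

end

lemma pullbackE:
  assumes "pullback C f g p q"
  obtains X Y Z P where "f \<in> hom C X Z" "g \<in> hom C Y Z" "p \<in> hom C P X" "q \<in> hom C P Y"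
    and "cComp C f p = cComp C g q"
  using assms unfolding pullback_def hom_def by auto

lemma pullback_universal:
  assumes "pullback C f g p q" and "p \<in> hom C P X" "q \<in> hom C P Y"
    and "a \<in> hom C T X" "b \<in> hom C T Y" "cComp C f a = cComp C g b"
  shows "\<exists>!k. k \<in> hom C T P \<and> cComp C p k = a \<and> cComp C q k = b"
proof -
  have universal: "\<forall>a b. a \<in> cArr C \<and> b \<in> cArr C \<and> cDom C a = cDom C b \<and> cCod C a = cDom C f \<and>
      cCod C b = cDom C g \<and> cComp C f a = cComp C g b \<longrightarrow>
      (\<exists>!k. k \<in> cArr C \<and> cDom C k = cDom C a \<and> cCod C k = cDom C p \<and>
        cComp C p k = a \<and> cComp C q k = b)"
    using assms(1) unfolding pullback_def by blast
  have "a \<in> cArr C" "b \<in> cArr C" "cDom C a = T" "cDom C b = T" "cCod C a = cDom C f"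
    "cCod C b = cDom C g" "cDom C p = P"
    using assms(1-5) unfolding pullback_def hom_def by auto
  then have "\<exists>!k. k \<in> cArr C \<and> cDom C k = T \<and> cCod C k = P \<and> cComp C p k = a \<and> cComp C q k = b"
    using universal[rule_format, of a b] assms(6) by simp
  then show ?thesis
    by (simp add: hom_def)
qed

lemma pullback_lift:
  assumes "pullback C f g p q" and "p \<in> hom C P X" "q \<in> hom C P Y"
    and "a \<in> hom C T X" "b \<in> hom C T Y" "cComp C f a = cComp C g b"
  obtains k where "k \<in> hom C T P" "cComp C p k = a" "cComp C q k = b"
  using pullback_universal[OF assms] by blast

lemma pullbackI:
  assumes "f \<in> hom C X Z" "g \<in> hom C Y Z" "p \<in> hom C P X" "q \<in> hom C P Y"
    and "cComp C f p = cComp C g q"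
    and lift: "\<And>T a b. a \<in> hom C T X \<Longrightarrow> b \<in> hom C T Y \<Longrightarrow> cComp C f a = cComp C g b \<Longrightarrow>
      \<exists>k\<in>hom C T P. cComp C p k = a \<and> cComp C q k = b"
    and unique: "\<And>T k k'. k \<in> hom C T P \<Longrightarrow> k' \<in> hom C T P \<Longrightarrow>
      cComp C p k = cComp C p k' \<Longrightarrow> cComp C q k = cComp C q k' \<Longrightarrow> k = k'"
  shows "pullback C f g p q"
  unfolding pullback_def
proof (intro conjI allI impI)
  fix a b
  assume "a \<in> cArr C \<and> b \<in> cArr C \<and> cDom C a = cDom C b \<and> cCod C a = cDom C f \<and>
    cCod C b = cDom C g \<and> cComp C f a = cComp C g b"
  then have "a \<in> hom C (cDom C a) X" "b \<in> hom C (cDom C a) Y" "cComp C f a = cComp C g b"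
    using assms(1,2) by (auto simp: hom_def)
  then obtain k where "k \<in> hom C (cDom C a) P" "cComp C p k = a" "cComp C q k = b"
    using lift by blast
  then show "\<exists>!k. k \<in> cArr C \<and> cDom C k = cDom C a \<and> cCod C k = cDom C p \<and>
    cComp C p k = a \<and> cComp C q k = b"
    using unique assms(3) by (auto simp: hom_def)
qed (use assms(1-5) in \<open>auto simp: hom_def\<close>)

lemma pullback_jointly_monic:
  assumes C: "category C" and pb: "pullback C f g p q" and p: "p \<in> hom C P X"
    and k: "k \<in> hom C T P" and k': "k' \<in> hom C T P"
    and "cComp C p k = cComp C p k'" "cComp C q k = cComp C q k'"
  shows "k = k'"
proof -
  obtain Y Z where f: "f \<in> hom C X Z" and g: "g \<in> hom C Y Z" and q: "q \<in> hom C P Y"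
    and sq: "cComp C f p = cComp C g q"
    by (rule pullbackE[OF pb]) (use p that in \<open>auto simp: hom_def\<close>)
  have "cComp C f (cComp C p k) = cComp C g (cComp C q k)"
    using f g p q k sq by (simp add: comp_assoc[OF C])
  then have "\<exists>!j. j \<in> hom C T P \<and> cComp C p j = cComp C p k \<and> cComp C q j = cComp C q k"
    by (rule pullback_universal[OF pb p q comp_in_hom[OF C k p] comp_in_hom[OF C k q]])
  then show ?thesis
    using k k' assms(6,7) by (auto elim: ex1E)
qed

lemma pullback_swap:
  assumes pb: "pullback C f g p q"
  shows "pullback C g f q p"
proof -
  have eq: "cDom C q = cDom C p" using pb by (simp add: pullback_def)
  show ?thesis unfolding pullback_def
  proof (intro conjI allI impI)
    fix a b
    assume "a \<in> cArr C \<and> b \<in> cArr C \<and> cDom C a = cDom C b \<and> cCod C a = cDom C g \<and>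
      cCod C b = cDom C f \<and> cComp C g a = cComp C f b"
    then have "\<exists>!k. k \<in> hom C (cDom C a) (cDom C p) \<and> cComp C p k = b \<and> cComp C q k = a"
      using pb by (intro pullback_universal[OF pb, where X = "cCod C p" and Y = "cCod C q"])
        (auto simp: hom_def pullback_def)
    moreover have "\<And>k. (k \<in> hom C (cDom C a) (cDom C p) \<and> cComp C p k = b \<and> cComp C q k = a)
        \<longleftrightarrow> (k \<in> cArr C \<and> cDom C k = cDom C a \<and> cCod C k = cDom C q \<and>
          cComp C q k = a \<and> cComp C p k = b)"
      using eq by (auto simp: hom_def)
    ultimately show "\<exists>!k. k \<in> cArr C \<and> cDom C k = cDom C a \<and> cCod C k = cDom C q \<and>
        cComp C q k = a \<and> cComp C p k = b"
      by simp
  qed (use pb in \<open>auto simp: pullback_def\<close>)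
qed

(* Pasting and cancellation refer to the diagram

     Q --p'--> P --q--> Y
     |         |        |
     q'        p        g
     v         v        v
     W --h---> X --f--> Z                                                   *)

lemma pullback_paste:
  assumes C: "category C" and right: "pullback C f g p q" and left: "pullback C p h p' q'"
  shows "pullback C (cComp C f h) g q' (cComp C q p')"
proof -
  obtain X Y Z P where f: "f \<in> hom C X Z" and g: "g \<in> hom C Y Z"
    and p: "p \<in> hom C P X" and q: "q \<in> hom C P Y" and sq: "cComp C f p = cComp C g q"
    using pullbackE[OF right] .
  obtain W Q where h: "h \<in> hom C W X" and p': "p' \<in> hom C Q P" and q': "q' \<in> hom C Q W"
    and sq': "cComp C p p' = cComp C h q'"
    by (rule pullbackE[OF left]) (use p that in \<open>auto simp: hom_def\<close>)
  note comp_assoc[OF C, simp]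
  show ?thesis
  proof (rule pullbackI)
    have "cComp C (cComp C f h) q' = cComp C f (cComp C p p')"
      using f h q' sq' by simp
    also have "\<dots> = cComp C g (cComp C q p')"
      using f p p' q g sq by simp
    finally show "cComp C (cComp C f h) q' = cComp C g (cComp C q p')" .
  next
    fix T a b
    assume a: "a \<in> hom C T W" and b: "b \<in> hom C T Y"
      and ab: "cComp C (cComp C f h) a = cComp C g b"
    have "cComp C f (cComp C h a) = cComp C g b"
      using f h a ab by simp
    then obtain k where k: "k \<in> hom C T P" "cComp C p k = cComp C h a" "cComp C q k = b"
      using pullback_lift[OF right p q comp_in_hom[OF C a h] b] by blast
    then obtain l where l: "l \<in> hom C T Q" "cComp C p' l = k" "cComp C q' l = a"
      using pullback_lift[OF left p' q' k(1) a] by blast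
    have "cComp C (cComp C q p') l = cComp C q (cComp C p' l)"
      using q p' l(1) by simp
    also have "\<dots> = b"
      using k(3) l(2) by simp
    finally show "\<exists>l\<in>hom C T Q. cComp C q' l = a \<and> cComp C (cComp C q p') l = b"
      using l by blast
  next
    fix T l l'
    assume l: "l \<in> hom C T Q" and l': "l' \<in> hom C T Q"
      and eq_q': "cComp C q' l = cComp C q' l'"
      and eq_qp': "cComp C (cComp C q p') l = cComp C (cComp C q p') l'"
    have "cComp C p (cComp C p' l) = cComp C h (cComp C q' l)"
      using p p' h q' l sq' by simp
    also have "\<dots> = cComp C p (cComp C p' l')"
      using p p' h q' l' sq' eq_q' by simp
    finally have "cComp C p (cComp C p' l) = cComp C p (cComp C p' l')" .
    moreover have "cComp C q (cComp C p' l) = cComp C q (cComp C p' l')"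
      using q p' l l' eq_qp' by simp
    ultimately have "cComp C p' l = cComp C p' l'"
      using pullback_jointly_monic[OF C right p comp_in_hom[OF C l p'] comp_in_hom[OF C l' p']]
      by blast
    then show "l = l'"
      using pullback_jointly_monic[OF C left p' l l' _ eq_q'] by blast
  qed (use f g h p q p' q' comp_in_hom[OF C h f] comp_in_hom[OF C p' q] in auto)
qed

lemma pullback_cancel:
  assumes C: "category C" and right: "pullback C f g p q" and p: "p \<in> hom C P X"
    and h: "h \<in> hom C W X" and p': "p' \<in> hom C Q P"
    and outer: "pullback C (cComp C f h) g q' (cComp C q p')"
    and sq': "cComp C p p' = cComp C h q'"
  shows "pullback C p h p' q'"
proof -
  obtain Y Z where f: "f \<in> hom C X Z" and g: "g \<in> hom C Y Z" and q: "q \<in> hom C P Y"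
    and sq: "cComp C f p = cComp C g q"
    by (rule pullbackE[OF right]) (use p that in \<open>auto simp: hom_def\<close>)
  note comp_assoc[OF C, simp]
  have q': "q' \<in> hom C Q W"
    by (rule pullbackE[OF outer]) (use comp_in_hom[OF C h f] comp_in_hom[OF C p' q] in \<open>auto simp: hom_def\<close>)
  show ?thesis
  proof (rule pullbackI[OF p h p' q' sq'])
    fix T a b
    assume a: "a \<in> hom C T P" and b: "b \<in> hom C T W" and ab: "cComp C p a = cComp C h b"
    have "cComp C (cComp C f h) b = cComp C f (cComp C p a)"
      using f h b ab by simp
    also have "\<dots> = cComp C g (cComp C q a)"
      using f p q g a sq by simp
    finally obtain l where l: "l \<in> hom C T Q" "cComp C q' l = b"
        "cComp C (cComp C q p') l = cComp C q a"
      using pullback_lift[OF outer q' comp_in_hom[OF C p' q] b comp_in_hom[OF C a q]] by blast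
    have "cComp C p (cComp C p' l) = cComp C h (cComp C q' l)"
      using p p' h q' l(1) sq' by simp
    also have "\<dots> = cComp C p a"
      using l(2) ab by simp
    finally have "cComp C p (cComp C p' l) = cComp C p a" .
    moreover have "cComp C q (cComp C p' l) = cComp C q a"
      using q p' l(1,3) by simp
    ultimately have "cComp C p' l = a"
      using pullback_jointly_monic[OF C right p comp_in_hom[OF C l(1) p'] a] by blast
    then show "\<exists>l\<in>hom C T Q. cComp C p' l = a \<and> cComp C q' l = b"
      using l by blast
  next
    fix T l l'
    assume l: "l \<in> hom C T Q" and l': "l' \<in> hom C T Q"
      and eq_p': "cComp C p' l = cComp C p' l'" and eq_q': "cComp C q' l = cComp C q' l'"
    have "cComp C (cComp C q p') l = cComp C q (cComp C p' l)"
      using q p' l by simp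
    also have "\<dots> = cComp C (cComp C q p') l'"
      using q p' l' by (simp only: eq_p' comp_assoc[OF C])
    finally show "l = l'"
      using pullback_jointly_monic[OF C outer q' l l' eq_q'] by blast
  qed
qed

lemma pullback_id:
  assumes C: "category C" and f: "f \<in> hom C x y"
  shows "pullback C f (cId C y) (cId C x) f"
proof -
  have x: "cId C x \<in> hom C x x" and y: "cId C y \<in> hom C y y"
    using C f id_in_hom[OF C] unfolding category_def hom_def by auto
  show ?thesis
  proof (rule pullbackI[OF f y x f])
    show "cComp C f (cId C x) = cComp C (cId C y) f"
      using f by (simp add: comp_id_left[OF C] comp_id_right[OF C])
  next
    fix T a b
    assume "a \<in> hom C T x" "b \<in> hom C T y" "cComp C f a = cComp C (cId C y) b"
    then show "\<exists>k\<in>hom C T x. cComp C (cId C x) k = a \<and> cComp C f k = b"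
      by (auto simp: comp_id_left[OF C])
  next
    fix T k k'
    assume "k \<in> hom C T x" "k' \<in> hom C T x" "cComp C (cId C x) k = cComp C (cId C x) k'"
    then show "k = k'"
      by (simp add: comp_id_left[OF C])
  qed
qed

lemma functor_arr_hom:
  "functor A D F \<Longrightarrow> u \<in> cArr A \<Longrightarrow> farr F u \<in> hom D (fobj F (cDom A u)) (fobj F (cCod A u))"
  unfolding functor_def by blast

lemma functor_comp:
  "functor A D F \<Longrightarrow> u \<in> cArr A \<Longrightarrow> v \<in> cArr A \<Longrightarrow> cDom A v = cCod A u \<Longrightarrow>
    farr F (cComp A v u) = cComp D (farr F v) (farr F u)"
  unfolding functor_def by blast

lemma nat_trans_naturality:
  "nat_trans A D F G \<alpha> \<Longrightarrow> u \<in> cArr A \<Longrightarrow>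
    cComp D (farr G u) (\<alpha> (cDom A u)) = cComp D (\<alpha> (cCod A u)) (farr F u)"
  unfolding nat_trans_def by blast

lemma nat_trans_component_hom:
  "nat_trans A D F G \<alpha> \<Longrightarrow> x \<in> cObj A \<Longrightarrow> \<alpha> x \<in> hom D (fobj F x) (fobj G x)"
  unfolding nat_trans_def by blast

lemma cartesian_nt_functors:
  "cartesian_nt A D F G \<alpha> \<Longrightarrow> functor A D F \<and> functor A D G"
  unfolding cartesian_nt_def nat_trans_def by blast

lemma cartesian_ntI:
  assumes "functor A D F" "functor A D G"
    and "\<And>x. x \<in> cObj A \<Longrightarrow> \<alpha> x \<in> hom D (fobj F x) (fobj G x)"
    and "\<And>u. u \<in> cArr A \<Longrightarrow> pullback D (farr G u) (\<alpha> (cCod A u)) (\<alpha> (cDom A u)) (farr F u)"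
    and "\<And>x. x \<notin> cObj A \<Longrightarrow> \<alpha> x = undefined"
  shows "cartesian_nt A D F G \<alpha>"
  using assms unfolding cartesian_nt_def nat_trans_def pullback_def by blast

lemma cartesian_nt_id:
  assumes A: "category A" and D: "category D" and F: "functor A D F"
  shows "cartesian_nt A D F F (\<lambda>x\<in>cObj A. cId D (fobj F x))"
proof (rule cartesian_ntI[OF F F])
  fix u
  assume u: "u \<in> cArr A"
  then have "cDom A u \<in> cObj A" "cCod A u \<in> cObj A"
    using A unfolding category_def by auto
  then show "pullback D (farr F u) ((\<lambda>x\<in>cObj A. cId D (fobj F x)) (cCod A u))
      ((\<lambda>x\<in>cObj A. cId D (fobj F x)) (cDom A u)) (farr F u)"
    using pullback_id[OF D functor_arr_hom[OF F u]] by simp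
qed (use F id_in_hom[OF D] in \<open>auto simp: functor_def\<close>)

lemma cartesian_nt_comp:
  assumes A: "category A" and D: "category D"
    and \<alpha>: "cartesian_nt A D F G \<alpha>" and \<beta>: "cartesian_nt A D G H \<beta>"
  shows "cartesian_nt A D F H (\<lambda>x\<in>cObj A. cComp D (\<beta> x) (\<alpha> x))"
proof (rule cartesian_ntI)
  show "functor A D F" "functor A D H"
    using cartesian_nt_functors \<alpha> \<beta> by blast+
  have "nat_trans A D F G \<alpha>" "nat_trans A D G H \<beta>"
    using \<alpha> \<beta> unfolding cartesian_nt_def by blast+
  then show "(\<lambda>x\<in>cObj A. cComp D (\<beta> x) (\<alpha> x)) x \<in> hom D (fobj F x) (fobj H x)"
    if "x \<in> cObj A" for x
    using that comp_in_hom[OF D] nat_trans_component_hom by fastforce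
next
  fix u
  assume u: "u \<in> cArr A"
  then have "cDom A u \<in> cObj A" "cCod A u \<in> cObj A"
    using A unfolding category_def by auto
  moreover have "pullback D (farr H u) (\<beta> (cCod A u)) (\<beta> (cDom A u)) (farr G u)"
    and "pullback D (farr G u) (\<alpha> (cCod A u)) (\<alpha> (cDom A u)) (farr F u)"
    using \<alpha> \<beta> u unfolding cartesian_nt_def by blast+
  from pullback_paste[OF D pullback_swap[OF this(1)] this(2)]
  have "pullback D (cComp D (\<beta> (cCod A u)) (\<alpha> (cCod A u))) (farr H u) (farr F u)
      (cComp D (\<beta> (cDom A u)) (\<alpha> (cDom A u)))" .
  ultimately show "pullback D (farr H u) ((\<lambda>x\<in>cObj A. cComp D (\<beta> x) (\<alpha> x)) (cCod A u))
      ((\<lambda>x\<in>cObj A. cComp D (\<beta> x) (\<alpha> x)) (cDom A u)) (farr F u)"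
    by (simp add: pullback_swap)
qed simp

lemma category_CartNt:
  assumes A: "category A" and D: "category D"
  shows "category (CartNt A D)"
proof -
  have unit_left: "(\<lambda>x\<in>cObj A. cComp D (cId D (fobj G x)) (\<alpha> x)) = \<alpha>"
    and unit_right: "(\<lambda>x\<in>cObj A. cComp D (\<alpha> x) (cId D (fobj F x))) = \<alpha>"
    if "cartesian_nt A D F G \<alpha>" for F G \<alpha>
  proof -
    have hom: "\<And>x. x \<in> cObj A \<Longrightarrow> \<alpha> x \<in> hom D (fobj F x) (fobj G x)"
      and "\<And>x. x \<notin> cObj A \<Longrightarrow> \<alpha> x = undefined"
      using that unfolding cartesian_nt_def nat_trans_def by blast+
    moreover have "cComp D (cId D (fobj G x)) (\<alpha> x) = \<alpha> x" "cComp D (\<alpha> x) (cId D (fobj F x)) = \<alpha> x"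
      if "x \<in> cObj A" for x
      using hom[OF that] comp_id_left[OF D] comp_id_right[OF D] by blast+
    ultimately show "(\<lambda>x\<in>cObj A. cComp D (cId D (fobj G x)) (\<alpha> x)) = \<alpha>"
      "(\<lambda>x\<in>cObj A. cComp D (\<alpha> x) (cId D (fobj F x))) = \<alpha>"
      by (auto simp: fun_eq_iff)
  qed
  have assoc: "(\<lambda>x\<in>cObj A. cComp D (\<gamma> x) (cComp D (\<beta> x) (\<alpha> x))) =
      (\<lambda>x\<in>cObj A. cComp D (cComp D (\<gamma> x) (\<beta> x)) (\<alpha> x))"
    if "cartesian_nt A D F G \<alpha>" "cartesian_nt A D G H \<beta>" "cartesian_nt A D H K \<gamma>"
    for F G H K \<alpha> \<beta> \<gamma>
  proof (rule restrict_ext)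
    fix x
    assume x: "x \<in> cObj A"
    have "nat_trans A D F G \<alpha>" and "nat_trans A D G H \<beta>" and "nat_trans A D H K \<gamma>"
      using that unfolding cartesian_nt_def by blast+
    from nat_trans_component_hom[OF this(1) x] nat_trans_component_hom[OF this(2) x]
      nat_trans_component_hom[OF this(3) x]
    show "cComp D (\<gamma> x) (cComp D (\<beta> x) (\<alpha> x)) = cComp D (cComp D (\<gamma> x) (\<beta> x)) (\<alpha> x)"
      by (rule comp_assoc[OF D])
  qed
  show ?thesis
    unfolding category_def
    by (auto simp: CartNt_def Ball_def unit_left unit_right assoc cartesian_nt_functors
        cartesian_nt_id[OF A D] cartesian_nt_comp[OF A D] cong: restrict_cong)
qed

lemma cartesian_functor_dom_of_cartesian_nt:
  assumes D: "category D" and \<mu>: "cartesian_nt A D G H \<mu>" and H: "cartesian_functor A D H"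
  shows "cartesian_functor A D G"
  unfolding cartesian_functor_def
proof (intro conjI allI impI)
  have nt: "nat_trans A D G H \<mu>"
    using \<mu> unfolding cartesian_nt_def by blast
  then show G: "functor A D G"
    unfolding nat_trans_def by blast
  have square: "\<And>u. u \<in> cArr A \<Longrightarrow> pullback D (farr H u) (\<mu> (cCod A u)) (\<mu> (cDom A u)) (farr G u)"
    using \<mu> unfolding cartesian_nt_def by blast
  fix f g p q
  assume pb: "pullback A f g p q"
  define X Y Z P where "X = cDom A f" and "Y = cDom A g" and "Z = cCod A f" and "P = cDom A p"
  have arrs: "f \<in> cArr A" "g \<in> cArr A" "p \<in> cArr A" "q \<in> cArr A"
    and objs: "cCod A p = X" "cCod A q = Y" "cDom A q = P" "cCod A g = Z"
    and sq: "cComp A f p = cComp A g q"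
    using pb unfolding pullback_def X_def Y_def Z_def P_def by auto
  have Gf: "farr G f \<in> hom D (fobj G X) (fobj G Z)"
    and Gg: "farr G g \<in> hom D (fobj G Y) (fobj G Z)"
    and Gq: "farr G q \<in> hom D (fobj G P) (fobj G Y)"
    using functor_arr_hom[OF G arrs(1)] functor_arr_hom[OF G arrs(2)] functor_arr_hom[OF G arrs(4)]
      objs by (simp_all add: X_def Y_def Z_def P_def)
  have "pullback D (farr H f) (farr H g) (farr H p) (farr H q)"
    using H pb unfolding cartesian_functor_def by blast
  from pullback_paste[OF D this square[OF arrs(3)]]
  have "pullback D (cComp D (farr H f) (\<mu> X)) (farr H g) (farr G p) (cComp D (farr H q) (\<mu> P))"
    using objs P_def by simp
  then have outer: "pullback D (cComp D (\<mu> Z) (farr G f)) (farr H g) (farr G p)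
      (cComp D (\<mu> Y) (farr G q))"
    using nat_trans_naturality[OF nt arrs(1)] nat_trans_naturality[OF nt arrs(4)] objs
    unfolding X_def Z_def by simp
  have "cComp D (farr G g) (farr G q) = cComp D (farr G f) (farr G p)"
    using functor_comp[OF G arrs(3,1)] functor_comp[OF G arrs(4,2)] objs sq
    unfolding X_def Y_def by simp
  with pullback_swap[OF square[OF arrs(2)]] outer
  have "pullback D (farr G g) (farr G f) (farr G q) (farr G p)"
    using pullback_cancel[OF D _ Gg Gf Gq] objs Y_def by simp
  then show "pullback D (farr G f) (farr G g) (farr G p) (farr G q)"
    by (rule pullback_swap)
qed

definition full_subcategory :: "('o, 'a) cat \<Rightarrow> ('o, 'a) cat \<Rightarrow> bool" where
  "full_subcategory S C \<longleftrightarrow> cObj S \<subseteq> cObj C \<and>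
     cArr S = {f \<in> cArr C. cDom C f \<in> cObj S \<and> cCod C f \<in> cObj S} \<and>
     cDom S = cDom C \<and> cCod S = cCod C \<and> cId S = cId C \<and> cComp S = cComp C"

lemma ofs_full_subcategory:
  assumes C: "category C" and ofs: "ofs C E M" and S: "full_subcategory S C"
    and M_dom: "\<And>m. m \<in> M \<Longrightarrow> cCod C m \<in> cObj S \<Longrightarrow> cDom C m \<in> cObj S"
  shows "ofs S (E \<inter> cArr S) (M \<inter> cArr S)"
proof -
  have ops: "cDom S = cDom C" "cCod S = cCod C" "cId S = cId C" "cComp S = cComp C"
    using S unfolding full_subcategory_def by auto
  have arr_S: "f \<in> cArr S \<longleftrightarrow> f \<in> cArr C \<and> cDom C f \<in> cObj S \<and> cCod C f \<in> cObj S" for f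
    using S unfolding full_subcategory_def by auto
  have E: "E \<subseteq> cArr C" and M: "M \<subseteq> cArr C"
    and iso_EM: "\<And>f. iso C f \<Longrightarrow> f \<in> E \<and> f \<in> M"
    and comp_E: "\<And>e e'. e \<in> E \<Longrightarrow> e' \<in> E \<Longrightarrow> cDom C e' = cCod C e \<Longrightarrow> cComp C e' e \<in> E"
    and comp_M: "\<And>m m'. m \<in> M \<Longrightarrow> m' \<in> M \<Longrightarrow> cDom C m' = cCod C m \<Longrightarrow> cComp C m' m \<in> M"
    and lift: "\<And>e m f g. e \<in> E \<Longrightarrow> m \<in> M \<Longrightarrow> f \<in> cArr C \<Longrightarrow> g \<in> cArr C \<Longrightarrow>
      cDom C f = cDom C e \<Longrightarrow> cCod C f = cDom C m \<Longrightarrow> cDom C g = cCod C e \<Longrightarrow>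
      cCod C g = cCod C m \<Longrightarrow> cComp C g e = cComp C m f \<Longrightarrow>
      \<exists>!d. d \<in> cArr C \<and> cDom C d = cCod C e \<and> cCod C d = cDom C m \<and>
        cComp C d e = f \<and> cComp C m d = g"
    and factor: "\<And>h. h \<in> cArr C \<Longrightarrow> \<exists>e\<in>E. \<exists>m\<in>M. cDom C m = cCod C e \<and> cComp C m e = h"
    using ofs unfolding ofs_def by blast+
  have comp_dom_cod: "cDom C (cComp C g f) = cDom C f" "cCod C (cComp C g f) = cCod C g"
    if "f \<in> cArr C" "g \<in> cArr C" "cDom C g = cCod C f" for f g
    using C that unfolding category_def by auto
  show ?thesis
    unfolding ofs_def ops
  proof (intro conjI ballI allI impI)
    fix f
    assume "iso S f"
    then have "iso C f" and "f \<in> cArr S"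
      using arr_S unfolding iso_def ops by blast+
    then show "f \<in> E \<inter> cArr S" "f \<in> M \<inter> cArr S"
      using iso_EM by auto
  next
    fix e e'
    assume "e \<in> E \<inter> cArr S" "e' \<in> E \<inter> cArr S" "cDom C e' = cCod C e"
    then show "cComp C e' e \<in> E \<inter> cArr S"
      using comp_E E comp_dom_cod arr_S by auto
  next
    fix m m'
    assume "m \<in> M \<inter> cArr S" "m' \<in> M \<inter> cArr S" "cDom C m' = cCod C m"
    then show "cComp C m' m \<in> M \<inter> cArr S"
      using comp_M M comp_dom_cod arr_S by auto
  next
    fix e m f g
    assume e: "e \<in> E \<inter> cArr S" and m: "m \<in> M \<inter> cArr S" and "f \<in> cArr S" "g \<in> cArr S"
      and "cDom C f = cDom C e \<and> cCod C f = cDom C m \<and> cDom C g = cCod C e \<and>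
        cCod C g = cCod C m \<and> cComp C g e = cComp C m f"
    then have "\<exists>!d. d \<in> cArr C \<and> cDom C d = cCod C e \<and> cCod C d = cDom C m \<and>
        cComp C d e = f \<and> cComp C m d = g"
      using lift arr_S by simp
    moreover have "cCod C e \<in> cObj S" "cDom C m \<in> cObj S"
      using e m arr_S by auto
    ultimately show "\<exists>!d. d \<in> cArr S \<and> cDom C d = cCod C e \<and> cCod C d = cDom C m \<and>
        cComp C d e = f \<and> cComp C m d = g"
      using arr_S by (metis (no_types, lifting))
  next
    fix h
    assume h: "h \<in> cArr S"
    then obtain e m where em: "e \<in> E" "m \<in> M" "cDom C m = cCod C e" "cComp C m e = h"
      using factor arr_S by blast
    have "e \<in> cArr C" "m \<in> cArr C"
      using em E M by auto
    moreover have "cDom C e = cDom C h" "cCod C m = cCod C h"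
      using comp_dom_cod[OF calculation em(3)] em(4) by auto
    moreover have "cDom C m \<in> cObj S"
      using M_dom[OF em(2)] h arr_S calculation(4) by simp
    ultimately have "e \<in> cArr S" "m \<in> cArr S"
      using h em(3) arr_S by auto
    with em show "\<exists>e\<in>E \<inter> cArr S. \<exists>m\<in>M \<inter> cArr S. cDom C m = cCod C e \<and> cComp C m e = h"
      by blast
  qed (auto simp: ops)
qed

lemma full_subcategory_Cart: "full_subcategory (Cart A D) (CartNt A D)"
  unfolding full_subcategory_def Cart_def CartNt_def cartesian_functor_def by auto

theorem lemma4p5:
  fixes A :: "('o1, 'a1) cat" and D :: "('o2, 'a2) cat"
  assumes "category A" and "has_pullbacks A" and "category D"
    and "ofs (CartNt A D) E M"
  shows "ofs (Cart A D) (E \<inter> cArr (Cart A D)) (M \<inter> cArr (Cart A D))"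
proof -
  have "cDom (CartNt A D) m \<in> cObj (Cart A D)"
    if "m \<in> M" and "cCod (CartNt A D) m \<in> cObj (Cart A D)" for m
  proof -
    have "m \<in> cArr (CartNt A D)"
      using assms(4) that(1) unfolding ofs_def by blast
    then show ?thesis
      using that(2) cartesian_functor_dom_of_cartesian_nt[OF assms(3)]
      by (cases m) (auto simp: CartNt_def Cart_def)
  qed
  then show ?thesis
    by (rule ofs_full_subcategory[OF category_CartNt[OF assms(1,3)] assms(4) full_subcategory_Cart])
qed

end
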